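(* Let $G=(V,E)$ be a connected bipartite simple graph with $|V|=n$, with bipartite orientations $O_{\text{down}}$ and $O_{\text{up}}$, and let $O$ be any acyclic orientation of $E$. Then there exists an injective function from the set of linear extensions of $O$ to the set of linear extensions of $O_{\text{up}}$, and such an injection is surjective if and only if $O=O_{\text{up}}$ or $O=O_{\text{down}}$. Equivalently, $e(P_O)\le e(P_{O_{\text{up}}})$ with equality if and only if $O$ is one of the two bipartite orientations, where $P_O$ denotes the poset induced by $O$ and $e(\cdot)$ the number of linear extensions. Consequently, the acyclic orientations of $G$ maximizing the number of linear extensions are exactly the bipartite orientations.
   Context: If $G=(V,E)$ has bipartition $V=V_1\sqcup V_2$, its two bipartite orientations are the orientation choosing $(v_1,v_2)$ (meaning $v_1$ directed to $v_2$) for every edge $\{v_1,v_2\}$ with $v_1\in V_1$, $v_2\in V_2$, and the orientation choosing $(v_2,v_1)$ for every such edge. An acyclic orientation of $E$ induces a partial order on $V$ in which $u<v$ if and only if there is a directed path from $u$ to $v$. A linear extension of a partial order $P$ on an $n$-element set $V$ is a bijection $\sigma:V\to[n]$ such that $u<_P v$ implies $\sigma(u)<\sigma(v)$; $e(P)$ denotes the number of linear extensions of $P$, and a linear extension of an acyclic orientation means a linear extension of its induced poset. *)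

theory Defs
  imports Main
begin

definition simple_graph :: "'a set \<Rightarrow> 'a set set \<Rightarrow> bool" where
  "simple_graph V E \<longleftrightarrow> finite V \<and> (\<forall>e\<in>E. e \<subseteq> V \<and> card e = 2)"

definition adj :: "'a set set \<Rightarrow> ('a \<times> 'a) set" where
  "adj E = {(u, v). {u, v} \<in> E}"

definition connected_graph :: "'a set \<Rightarrow> 'a set set \<Rightarrow> bool" where
  "connected_graph V E \<longleftrightarrow> (\<forall>u\<in>V. \<forall>v\<in>V. (u, v) \<in> (adj E)\<^sup>*)"

definition bipartition :: "'a set \<Rightarrow> 'a set set \<Rightarrow> 'a set \<Rightarrow> 'a set \<Rightarrow> bool" where
  "bipartition V E V1 V2 \<longleftrightarrow> V1 \<inter> V2 = {} \<and> V1 \<union> V2 = V \<and>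
     (\<forall>e\<in>E. \<exists>u\<in>V1. \<exists>v\<in>V2. e = {u, v})"

definition orientation :: "'a set set \<Rightarrow> ('a \<times> 'a) set \<Rightarrow> bool" where
  "orientation E Or \<longleftrightarrow> (\<forall>(u, v)\<in>Or. {u, v} \<in> E) \<and>
     (\<forall>e\<in>E. \<exists>!p. p \<in> Or \<and> {fst p, snd p} = e)"

definition O_down :: "'a set set \<Rightarrow> 'a set \<Rightarrow> 'a set \<Rightarrow> ('a \<times> 'a) set" where
  "O_down E V1 V2 = {(u, v). {u, v} \<in> E \<and> u \<in> V1 \<and> v \<in> V2}"

definition O_up :: "'a set set \<Rightarrow> 'a set \<Rightarrow> 'a set \<Rightarrow> ('a \<times> 'a) set" where
  "O_up E V1 V2 = {(v, u). {u, v} \<in> E \<and> u \<in> V1 \<and> v \<in> V2}"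

definition induced_order :: "('a \<times> 'a) set \<Rightarrow> ('a \<times> 'a) set" where
  "induced_order Or = Or\<^sup>+"

(* linear extensions of a (strict) order relation P on V, as bijections V \<rightarrow> [n];
   functions are taken extensional (undefined off V) so that the set is finite. *)
definition linear_extensions :: "'a set \<Rightarrow> ('a \<times> 'a) set \<Rightarrow> ('a \<Rightarrow> nat) set" where
  "linear_extensions V P = {\<sigma>. bij_betw \<sigma> V {1..card V} \<and>
       (\<forall>u\<in>V. \<forall>v\<in>V. (u, v) \<in> P \<longrightarrow> \<sigma> u < \<sigma> v) \<and>
       (\<forall>x. x \<notin> V \<longrightarrow> \<sigma> x = undefined)}"

definition lin_ext_orient :: "'a set \<Rightarrow> ('a \<times> 'a) set \<Rightarrow> ('a \<Rightarrow> nat) set" where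
  "lin_ext_orient V Or = linear_extensions V (induced_order Or)"

definition num_lin_ext :: "'a set \<Rightarrow> ('a \<times> 'a) set \<Rightarrow> nat" where
  "num_lin_ext V Or = card (lin_ext_orient V Or)"

end

theory Submission
  imports Defs "HOL-Library.FuncSet"
begin

(* A linear extension of the order generated by an arc set R on V is the same thing as an
   enumeration of V listing the tail of every arc before its head (a sequence respecting R);
   the number of such sequences satisfies the first-element recursion
     N(W) = sum over the sources z of R in W of N(W - {z}).
   Let F(W) be this number for the upward bipartite orientation (arcs from B to A).  The heart
   of the proof is the key inequality: for every independent set S of vertices of W,
     sum over z in S of F(W - {z})  <=  F(W),
   strictly unless S is tight (meets every edge inside W and contains every isolated vertex
   of W).  It is proved by induction on |W|: expanding both F(W - {z}) and F(W) by their first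
   elements, an exchange of the first two entries of a sequence injects the left-hand terms
   into a sum to which the induction hypothesis applies for the shifted sets.
   The sources of an arbitrary orientation O form an independent set, so induction gives
   e(O) <= F(V), strictly unless these sources are tight; in a connected graph a tight
   independent set is a colour class, which forces O to be one of the two bipartite
   orientations, and those have equal counts since reversing sequences swaps them.  The
   statements about injections are then pure cardinality. *)

definition respects_arcs :: "('a \<times> 'a) set \<Rightarrow> 'a list \<Rightarrow> bool" where
  "respects_arcs R xs \<longleftrightarrow> (\<forall>i<length xs. \<forall>j<length xs. (xs ! i, xs ! j) \<in> R \<longrightarrow> i < j)"

definition respecting_seqs :: "'a set \<Rightarrow> ('a \<times> 'a) set \<Rightarrow> 'a list set" where
  "respecting_seqs W R = {xs. distinct xs \<and> set xs = W \<and> respects_arcs R xs}"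

definition sources :: "('a \<times> 'a) set \<Rightarrow> 'a set \<Rightarrow> 'a set" where
  "sources R W = {z \<in> W. \<forall>x\<in>W. (x, z) \<notin> R}"

lemma respects_arcs_Cons:
  "respects_arcs R (z # ys) \<longleftrightarrow> respects_arcs R ys \<and> (\<forall>x\<in>set (z # ys). (x, z) \<notin> R)"
  unfolding respects_arcs_def all_set_conv_all_nth length_Cons All_less_Suc2 by auto

lemma respecting_seqs_empty [simp]: "respecting_seqs {} R = {[]}"
  unfolding respecting_seqs_def respects_arcs_def by auto

lemma finite_respecting_seqs: "finite W \<Longrightarrow> finite (respecting_seqs W R)"
  unfolding respecting_seqs_def
  by (rule finite_subset[OF _ finite_lists_length_le[of W "card W"]])
     (auto simp: distinct_card[symmetric])

lemma respecting_seqs_by_first: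
  assumes "W \<noteq> {}"
  shows "respecting_seqs W R = (\<Union>z\<in>sources R W. (#) z ` respecting_seqs (W - {z}) R)"
proof (intro equalityI subsetI)
  fix xs assume xs: "xs \<in> respecting_seqs W R"
  with assms obtain z ys where xz: "xs = z # ys"
    unfolding respecting_seqs_def by (cases xs) auto
  with xs have "z \<in> sources R W" "ys \<in> respecting_seqs (W - {z}) R"
    unfolding respecting_seqs_def sources_def by (auto simp: respects_arcs_Cons)
  with xz show "xs \<in> (\<Union>z\<in>sources R W. (#) z ` respecting_seqs (W - {z}) R)" by blast
next
  fix xs assume "xs \<in> (\<Union>z\<in>sources R W. (#) z ` respecting_seqs (W - {z}) R)"
  then obtain z ys where "z \<in> sources R W" "ys \<in> respecting_seqs (W - {z}) R" "xs = z # ys"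
    by blast
  then show "xs \<in> respecting_seqs W R"
    unfolding respecting_seqs_def sources_def by (auto simp: respects_arcs_Cons)
qed

lemma card_respecting_seqs_rec:
  assumes "finite W" "W \<noteq> {}"
  shows "card (respecting_seqs W R) = (\<Sum>z\<in>sources R W. card (respecting_seqs (W - {z}) R))"
proof -
  have "finite (sources R W)" using assms(1) unfolding sources_def by auto
  then have "card (respecting_seqs W R)
      = (\<Sum>z\<in>sources R W. card ((#) z ` respecting_seqs (W - {z}) R))"
    unfolding respecting_seqs_by_first[OF assms(2)]
    by (rule card_UN_disjoint) (auto intro: finite_respecting_seqs assms(1))
  then show ?thesis by (simp add: card_image)
qed

lemma respects_arcs_rev:
  assumes "respects_arcs (R\<inverse>) xs"
  shows "respects_arcs R (rev xs)"
  unfolding respects_arcs_def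
proof (intro allI impI)
  fix i j assume i: "i < length (rev xs)" and j: "j < length (rev xs)"
    and r: "(rev xs ! i, rev xs ! j) \<in> R"
  let ?n = "length xs"
  have "(xs ! (?n - Suc j), xs ! (?n - Suc i)) \<in> R\<inverse>" using r i j by (simp add: rev_nth)
  then have "?n - Suc j < ?n - Suc i"
    using assms i j unfolding respects_arcs_def by auto
  then show "i < j" using i j by simp
qed

lemma card_respecting_seqs_converse:
  "card (respecting_seqs W (R\<inverse>)) = card (respecting_seqs W R)"
proof -
  have "bij_betw rev (respecting_seqs W (R\<inverse>)) (respecting_seqs W R)"
    by (rule bij_betw_byWitness[where f'=rev])
       (auto simp: respecting_seqs_def
        intro: respects_arcs_rev[of R] respects_arcs_rev[of "R\<inverse>", simplified])
  then show ?thesis by (rule bij_betw_same_card)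
qed

definition position :: "'a list \<Rightarrow> 'a \<Rightarrow> nat" where
  "position xs = inv_into {..<length xs} ((!) xs)"

lemma position_nth:
  assumes "distinct xs"
  shows "x \<in> set xs \<Longrightarrow> position xs x < length xs"
    and "x \<in> set xs \<Longrightarrow> xs ! position xs x = x"
    and "i < length xs \<Longrightarrow> position xs (xs ! i) = i"
proof -
  have b: "bij_betw ((!) xs) {..<length xs} (set xs)" by (rule bij_betw_nth[OF assms]) auto
  show "x \<in> set xs \<Longrightarrow> position xs x < length xs"
    using bij_betw_inv_into[OF b] unfolding position_def bij_betw_def by auto
  show "x \<in> set xs \<Longrightarrow> xs ! position xs x = x"
    unfolding position_def by (rule bij_betw_inv_into_right[OF b])
  show "i < length xs \<Longrightarrow> position xs (xs ! i) = i"
    unfolding position_def by (rule bij_betw_inv_into_left[OF b]) auto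
qed

definition ranking_of_seq :: "'a set \<Rightarrow> 'a list \<Rightarrow> 'a \<Rightarrow> nat" where
  "ranking_of_seq V xs = (\<lambda>x. if x \<in> V then Suc (position xs x) else undefined)"

definition seq_of_ranking :: "'a set \<Rightarrow> ('a \<Rightarrow> nat) \<Rightarrow> 'a list" where
  "seq_of_ranking V \<sigma> = map (inv_into V \<sigma>) [1..<Suc (card V)]"

lemma position_mono_trancl:
  assumes xs: "xs \<in> respecting_seqs V R" and RV: "R \<subseteq> V \<times> V" and uv: "(u, v) \<in> R\<^sup>+"
  shows "position xs u < position xs v"
proof -
  have d: "distinct xs" and s: "set xs = V" and r: "respects_arcs R xs"
    using xs unfolding respecting_seqs_def by auto
  have arc: "position xs x < position xs y" if "(x, y) \<in> R" for x y
  proof -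
    have "x \<in> V" "y \<in> V" using that RV by auto
    then show ?thesis
      using r that position_nth[OF d] s unfolding respects_arcs_def by metis
  qed
  from uv show ?thesis
    by (induction rule: trancl_induct) (auto dest: arc)
qed

lemma ranking_of_seq_in:
  assumes xs: "xs \<in> respecting_seqs V R" and RV: "R \<subseteq> V \<times> V"
  shows "ranking_of_seq V xs \<in> linear_extensions V (R\<^sup>+)"
proof -
  have d: "distinct xs" and s: "set xs = V" using xs unfolding respecting_seqs_def by auto
  have len: "length xs = card V" using distinct_card[OF d] s by simp
  have "bij_betw (position xs) V {..<card V}"
    using bij_betw_inv_into[OF bij_betw_nth[OF d refl refl]] s len unfolding position_def by simp
  moreover have "bij_betw Suc {..<card V} {1..card V}"
    by (simp add: bij_betw_def image_Suc_lessThan)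
  ultimately have "bij_betw (Suc \<circ> position xs) V {1..card V}" by (rule bij_betw_trans)
  then have "bij_betw (ranking_of_seq V xs) V {1..card V}"
    by (rule bij_betw_cong[THEN iffD1, rotated]) (simp add: ranking_of_seq_def)
  then show ?thesis
    using position_mono_trancl[OF xs RV]
    unfolding linear_extensions_def by (simp add: ranking_of_seq_def)
qed

lemma seq_of_ranking_in:
  assumes "\<sigma> \<in> linear_extensions V (R\<^sup>+)"
  shows "seq_of_ranking V \<sigma> \<in> respecting_seqs V R"
    and "ranking_of_seq V (seq_of_ranking V \<sigma>) = \<sigma>"
proof -
  let ?n = "card V" and ?xs = "seq_of_ranking V \<sigma>"
  have b: "bij_betw \<sigma> V {1..?n}" and mono: "\<forall>u\<in>V. \<forall>v\<in>V. (u, v) \<in> R\<^sup>+ \<longrightarrow> \<sigma> u < \<sigma> v"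
    and ext: "\<forall>x. x \<notin> V \<longrightarrow> \<sigma> x = undefined"
    using assms unfolding linear_extensions_def by auto
  have bi: "bij_betw (inv_into V \<sigma>) {1..?n} V" by (rule bij_betw_inv_into[OF b])
  have upt: "set [1..<Suc ?n] = {1..?n}" by auto
  have len: "length ?xs = ?n" unfolding seq_of_ranking_def by simp
  have nth: "i < ?n \<Longrightarrow> ?xs ! i = inv_into V \<sigma> (Suc i)" for i
    unfolding seq_of_ranking_def by (simp del: upt_Suc add: nth_map_upt)
  have d: "distinct ?xs" and s: "set ?xs = V"
    unfolding seq_of_ranking_def using bi upt by (simp_all add: distinct_map bij_betw_def)
  have rank: "i < ?n \<Longrightarrow> \<sigma> (?xs ! i) = Suc i" for i
    using nth bij_betw_inv_into_right[OF b, of "Suc i"] by simp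
  have "respects_arcs R ?xs"
    unfolding respects_arcs_def
  proof (intro allI impI)
    fix i j assume "i < length ?xs" "j < length ?xs" "(?xs ! i, ?xs ! j) \<in> R"
    then have "\<sigma> (?xs ! i) < \<sigma> (?xs ! j)" using mono s by (metis nth_mem r_into_trancl')
    then show "i < j" using rank \<open>i < length ?xs\<close> \<open>j < length ?xs\<close> len by simp
  qed
  then show "?xs \<in> respecting_seqs V R" using d s unfolding respecting_seqs_def by simp
  show "ranking_of_seq V ?xs = \<sigma>"
  proof
    fix x show "ranking_of_seq V ?xs x = \<sigma> x"
    proof (cases "x \<in> V")
      case True
      have sx: "\<sigma> x \<in> {1..?n}" using b True by (auto simp: bij_betw_def)
      then have "?xs ! (\<sigma> x - 1) = x"
        using nth[of "\<sigma> x - 1"] bij_betw_inv_into_left[OF b True] by auto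
      then have "position ?xs x = \<sigma> x - 1" using position_nth(3)[OF d, of "\<sigma> x - 1"] sx len by auto
      then show ?thesis using True sx by (simp add: ranking_of_seq_def)
    qed (use ext in \<open>simp add: ranking_of_seq_def\<close>)
  qed
qed

lemma finite_linear_extensions: "finite V \<Longrightarrow> finite (linear_extensions V P)"
  by (rule finite_subset[OF _ finite_PiE[of V "\<lambda>_. {1..card V}"]])
     (auto simp: linear_extensions_def PiE_def extensional_def Pi_def bij_betw_def)

lemma inj_on_ranking_of_seq: "inj_on (ranking_of_seq V) (respecting_seqs V R)"
proof (rule inj_onI)
  fix xs ys assume "xs \<in> respecting_seqs V R" "ys \<in> respecting_seqs V R"
    and eq: "ranking_of_seq V xs = ranking_of_seq V ys"
  then have dx: "distinct xs" "set xs = V" and dy: "distinct ys" "set ys = V"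
    unfolding respecting_seqs_def by auto
  have pos: "x \<in> V \<Longrightarrow> position xs x = position ys x" for x
    using fun_cong[OF eq, of x] by (simp add: ranking_of_seq_def)
  have "length xs = length ys" using distinct_card dx dy by metis
  then show "xs = ys"
  proof (rule nth_equalityI)
    fix i assume i: "i < length xs"
    then have "xs ! i \<in> V" using dx by auto
    then show "xs ! i = ys ! i"
      using pos position_nth(2)[OF dy(1)] position_nth(3)[OF dx(1) i] dy by metis
  qed
qed

lemma card_linear_extensions_eq_seqs:
  assumes fin: "finite V" and RV: "R \<subseteq> V \<times> V"
  shows "card (linear_extensions V (R\<^sup>+)) = card (respecting_seqs V R)"
proof (rule antisym)
  have "inj_on (seq_of_ranking V) (linear_extensions V (R\<^sup>+))"
    by (rule inj_on_inverseI[where g="ranking_of_seq V"]) (rule seq_of_ranking_in(2))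
  then show "card (linear_extensions V (R\<^sup>+)) \<le> card (respecting_seqs V R)"
    by (rule card_inj_on_le) (auto intro: seq_of_ranking_in(1) finite_respecting_seqs fin)
  show "card (respecting_seqs V R) \<le> card (linear_extensions V (R\<^sup>+))"
    using inj_on_ranking_of_seq
    by (rule card_inj_on_le) (auto intro: ranking_of_seq_in[OF _ RV] finite_linear_extensions fin)
qed

definition nbrs :: "'a set set \<Rightarrow> 'a set \<Rightarrow> 'a \<Rightarrow> 'a set" where
  "nbrs E W v = {x \<in> W. {v, x} \<in> E}"

definition independent :: "'a set set \<Rightarrow> 'a set \<Rightarrow> bool" where
  "independent E S \<longleftrightarrow> (\<forall>x\<in>S. \<forall>y\<in>S. {x, y} \<notin> E)"

definition tight :: "'a set set \<Rightarrow> 'a set \<Rightarrow> 'a set \<Rightarrow> bool" where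
  "tight E W S \<longleftrightarrow> (\<forall>x y. {x, y} \<in> E \<longrightarrow> x \<in> W \<longrightarrow> y \<in> W \<longrightarrow> x \<in> S \<or> y \<in> S) \<and>
     (\<forall>v\<in>W. nbrs E W v = {} \<longrightarrow> v \<in> S)"

lemma orientation_arc:
  assumes "orientation E Or" "(u, v) \<in> Or"
  shows "{u, v} \<in> E"
  using assms unfolding orientation_def by fast

lemma orientation_covers:
  assumes "orientation E Or" "{x, y} \<in> E"
  shows "(x, y) \<in> Or \<or> (y, x) \<in> Or"
proof -
  have "\<forall>e\<in>E. \<exists>!p. p \<in> Or \<and> {fst p, snd p} = e"
    using assms(1) unfolding orientation_def by simp
  then have "\<exists>!p. p \<in> Or \<and> {fst p, snd p} = {x, y}" using assms(2) by (rule bspec)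
  then obtain p where "p \<in> Or" "{fst p, snd p} = {x, y}" by auto
  then show ?thesis by (cases p) (auto simp: doubleton_eq_iff)
qed

lemma independent_sources:
  assumes "orientation E Or"
  shows "independent E (sources Or W)"
  using orientation_covers[OF assms] unfolding independent_def sources_def by blast

lemma orientation_eq_from_sources:
  assumes Or: "orientation E Or" and EV: "\<forall>e\<in>E. e \<subseteq> V"
    and cover: "\<forall>x y. {x, y} \<in> E \<longrightarrow> x \<in> sources Or V \<or> y \<in> sources Or V"
  shows "Or = {(u, v). {u, v} \<in> E \<and> u \<in> sources Or V}"
proof (intro set_eqI iffI)
  fix p assume "p \<in> Or"
  then obtain u v where p: "p = (u, v)" "(u, v) \<in> Or" "{u, v} \<in> E"
    using orientation_arc[OF Or] by (cases p) auto
  then have "u \<in> V" "v \<notin> sources Or V" using EV unfolding sources_def by blast+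
  with p cover show "p \<in> {(u, v). {u, v} \<in> E \<and> u \<in> sources Or V}" by blast
next
  fix p assume "p \<in> {(u, v). {u, v} \<in> E \<and> u \<in> sources Or V}"
  then obtain u v where p: "p = (u, v)" "{u, v} \<in> E" "u \<in> sources Or V" by auto
  then have "v \<in> V" using EV by auto
  with p show "p \<in> Or" using orientation_covers[OF Or p(2)] unfolding sources_def by auto
qed

lemma orientation_subset:
  assumes "orientation E Or" "\<forall>e\<in>E. e \<subseteq> V"
  shows "Or \<subseteq> V \<times> V"
proof
  fix p assume "p \<in> Or"
  then obtain u v where "p = (u, v)" "{u, v} \<in> E" using orientation_arc[OF assms(1)] by (cases p) auto
  then show "p \<in> V \<times> V" using assms(2) by auto
qed

lemma num_lin_ext_eq_seqs:
  "finite V \<Longrightarrow> R \<subseteq> V \<times> V \<Longrightarrow> num_lin_ext V R = card (respecting_seqs V R)"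
  unfolding num_lin_ext_def lin_ext_orient_def induced_order_def
  by (rule card_linear_extensions_eq_seqs)

locale bipartite_edges =
  fixes E :: "'a set set" and A B :: "'a set"
  assumes sides_disjoint: "A \<inter> B = {}"
    and edge_between: "\<forall>e\<in>E. \<exists>a\<in>A. \<exists>b\<in>B. e = {a, b}"
begin

abbreviation Up :: "('a \<times> 'a) set" where "Up \<equiv> O_up E A B"

definition up_count :: "'a set \<Rightarrow> nat" where
  "up_count W = card (respecting_seqs W Up)"

lemma edge_cases:
  assumes "{x, y} \<in> E"
  shows "(x \<in> A \<and> y \<in> B \<and> x \<notin> B \<and> y \<notin> A) \<or> (x \<in> B \<and> y \<in> A \<and> x \<notin> A \<and> y \<notin> B)"
proof -
  obtain a b where ab: "a \<in> A" "b \<in> B" "{x, y} = {a, b}" using edge_between assms by blast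
  then have "a \<noteq> b" using sides_disjoint by auto
  then have "(x = a \<and> y = b) \<or> (x = b \<and> y = a)" using ab(3) by (auto simp: doubleton_eq_iff)
  then show ?thesis using ab sides_disjoint by auto
qed

lemma no_loop: "{x, x} \<notin> E"
  using edge_cases by blast

lemma up_arc_iff: "(x, y) \<in> Up \<longleftrightarrow> {x, y} \<in> E \<and> x \<in> B \<and> y \<in> A"
  unfolding O_up_def by (auto simp: insert_commute)

lemma O_up_eq: "Up = {(u, v). {u, v} \<in> E \<and> u \<in> B}"
  by (auto simp: up_arc_iff dest: edge_cases)

lemma O_down_eq: "O_down E A B = {(u, v). {u, v} \<in> E \<and> u \<notin> B}"
  unfolding O_down_def by (auto dest: edge_cases)

lemma O_down_converse: "O_down E A B = Up\<inverse>"
  unfolding O_down_def O_up_def by auto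

lemma sources_up:
  assumes "W \<subseteq> A \<union> B"
  shows "sources Up W = {z \<in> W. z \<in> B \<or> nbrs E W z = {}}"
  using assms unfolding sources_def nbrs_def up_arc_iff
  by (auto simp: insert_commute dest: edge_cases)

lemma up_count_empty: "up_count {} = 1"
  unfolding up_count_def by simp

lemma up_count_rec:
  "finite W \<Longrightarrow> W \<noteq> {} \<Longrightarrow> up_count W = (\<Sum>k\<in>sources Up W. up_count (W - {k}))"
  unfolding up_count_def by (rule card_respecting_seqs_rec)

lemma up_count_pos:
  assumes "finite W" "W \<subseteq> A \<union> B"
  shows "up_count W \<ge> 1"
  using assms
proof (induction "card W" arbitrary: W rule: less_induct)
  case less
  show ?case
  proof (cases "W = {}")
    case False
    have "sources Up W \<noteq> {}"
    proof (cases "W \<inter> B = {}")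
      case True
      obtain w where "w \<in> W" using False by auto
      moreover have "nbrs E W w = {}"
        using True \<open>w \<in> W\<close> less.prems(2) edge_cases unfolding nbrs_def by blast
      ultimately show ?thesis using sources_up[OF less.prems(2)] by auto
    qed (use sources_up[OF less.prems(2)] in auto)
    then obtain k where k: "k \<in> sources Up W" by auto
    then have "k \<in> W" unfolding sources_def by auto
    then have "1 \<le> up_count (W - {k})"
      using less.hyps[OF card_Diff1_less[OF less.prems(1) \<open>k \<in> W\<close>]] less.prems by auto
    also have "\<dots> \<le> (\<Sum>k\<in>sources Up W. up_count (W - {k}))"
      by (rule member_le_sum[OF k]) (use less.prems(1) in \<open>auto simp: sources_def\<close>)
    also have "\<dots> = up_count W" using up_count_rec[OF less.prems(1) False] by simp
    finally show ?thesis .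
  qed (simp add: up_count_empty)
qed

(* leaves W k: the vertices whose only neighbour in W is k.  shift W S k is the set that
   plays the role of S once the source k has been removed from W: k leaves S, and if k was
   in S its leaves enter. *)
definition leaves :: "'a set \<Rightarrow> 'a \<Rightarrow> 'a set" where
  "leaves W k = {a \<in> W. nbrs E W a = {k}}"

definition shift :: "'a set \<Rightarrow> 'a set \<Rightarrow> 'a \<Rightarrow> 'a set" where
  "shift W S k = (S - {k}) \<union> (if k \<in> S then leaves W k else {})"

lemma shift_subset: "S \<subseteq> W \<Longrightarrow> shift W S k \<subseteq> W - {k}"
  using no_loop[of k] unfolding shift_def leaves_def nbrs_def by auto

(* Shifting keeps independence: a new leaf is adjacent to nothing left in W - {k}. *)
lemma shift_independent:
  assumes SW: "S \<subseteq> W" and ind: "independent E S"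
  shows "independent E (shift W S k)"
  unfolding independent_def
proof (intro ballI notI)
  fix x y assume x: "x \<in> shift W S k" and y: "y \<in> shift W S k" and e: "{x, y} \<in> E"
  have xy: "x \<in> W - {k}" "y \<in> W - {k}" using x y shift_subset[OF SW] by auto
  have "x \<notin> leaves W k"
    using xy e unfolding leaves_def nbrs_def by auto
  moreover have "y \<notin> leaves W k"
    using xy e unfolding leaves_def nbrs_def by (auto simp: insert_commute)
  ultimately have "x \<in> S" "y \<in> S" using x y unfolding shift_def by (auto split: if_splits)
  then show False using ind e unfolding independent_def by auto
qed

lemma removed_source_is_leaf:
  assumes "W \<subseteq> A \<union> B" and y: "y \<in> sources Up (W - {z})" and "y \<notin> sources Up W"
  shows "nbrs E W y = {z} \<and> y \<in> A \<and> z \<in> B \<and> z \<in> W"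
proof -
  have "y \<in> W" and min: "\<forall>x\<in>W - {z}. (x, y) \<notin> Up" using y unfolding sources_def by auto
  then obtain x where x: "x \<in> W" "(x, y) \<in> Up" using assms(3) unfolding sources_def by auto
  with min have "x = z" by auto
  with x have zy: "z \<in> B" "y \<in> A" "{z, y} \<in> E" "z \<in> W" by (auto simp: up_arc_iff)
  have "nbrs E W y \<subseteq> {z}"
  proof
    fix w assume "w \<in> nbrs E W y"
    then have "w \<in> W" "{y, w} \<in> E" unfolding nbrs_def by auto
    then have "(w, y) \<in> Up" using zy(2) edge_cases by (auto simp: up_arc_iff insert_commute)
    then show "w \<in> {z}" using min \<open>w \<in> W\<close> by auto
  qed
  moreover have "z \<in> nbrs E W y" using zy unfolding nbrs_def by (auto simp: insert_commute)
  ultimately show ?thesis using zy by auto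
qed

(* The exchange map on pairs (first entry, second entry) of sequences: if the second entry
   is already a source of W the two are swapped, otherwise the pair is kept. *)
definition exchange :: "'a set \<Rightarrow> 'a \<times> 'a \<Rightarrow> 'a \<times> 'a" where
  "exchange M p = (if snd p \<in> M then (snd p, fst p) else p)"

lemma exchange_maps:
  assumes WAB: "W \<subseteq> A \<union> B" and p: "p \<in> (SIGMA z:S. sources Up (W - {z}))"
  shows "exchange (sources Up W) p \<in> (SIGMA k:sources Up W. shift W S k)"
proof -
  obtain z y where zy: "p = (z, y)" "z \<in> S" "y \<in> sources Up (W - {z})" using p by auto
  show ?thesis
  proof (cases "y \<in> sources Up W")
    case True
    moreover have "y \<noteq> z" using zy unfolding sources_def by auto
    ultimately show ?thesis using zy unfolding exchange_def shift_def by auto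
  next
    case False
    with removed_source_is_leaf[OF WAB zy(3)]
    have "nbrs E W y = {z}" "z \<in> sources Up W" "y \<in> W"
      using sources_up[OF WAB] zy(3) unfolding sources_def by auto
    with False zy show ?thesis unfolding exchange_def shift_def leaves_def by auto
  qed
qed

(* Injectivity uses independence of S: a swapped and a kept pair can only collide along an
   edge between two elements of S. *)
lemma exchange_inj:
  assumes WAB: "W \<subseteq> A \<union> B" and ind: "independent E S"
  shows "inj_on (exchange (sources Up W)) (SIGMA z:S. sources Up (W - {z}))"
proof (rule inj_onI)
  let ?M = "sources Up W"
  fix p q assume p: "p \<in> (SIGMA z:S. sources Up (W - {z}))" and q: "q \<in> (SIGMA z:S. sources Up (W - {z}))"
    and eq: "exchange ?M p = exchange ?M q"
  have leaf: "snd r \<notin> ?M \<Longrightarrow> {snd r, fst r} \<in> E" if "r \<in> (SIGMA z:S. sources Up (W - {z}))" for r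
    using removed_source_is_leaf[OF WAB, of "snd r" "fst r"] that unfolding nbrs_def by auto
  have S: "fst p \<in> S" "fst q \<in> S" using p q by auto
  show "p = q"
  proof (cases "snd p \<in> ?M"; cases "snd q \<in> ?M")
    assume "snd p \<in> ?M" "snd q \<notin> ?M"
    then have "{fst p, fst q} \<in> E" using eq leaf[OF q] unfolding exchange_def by auto
    then show ?thesis using ind S unfolding independent_def by blast
  next
    assume "snd p \<notin> ?M" "snd q \<in> ?M"
    then have "{fst q, fst p} \<in> E" using eq leaf[OF p] unfolding exchange_def by auto
    then show ?thesis using ind S unfolding independent_def by blast
  qed (use eq in \<open>auto simp: exchange_def prod_eq_iff\<close>)
qed

(* Exchange step: expanding F(W - {z}) by its first element and exchanging the first two
   entries bounds the left-hand side of the key inequality by the shifted sums. *)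
lemma exchange_le:
  assumes fin: "finite W" and WAB: "W \<subseteq> A \<union> B" and SW: "S \<subseteq> W"
    and ind: "independent E S" and nonsingle: "\<forall>z\<in>S. W \<noteq> {z}"
  shows "(\<Sum>z\<in>S. up_count (W - {z})) \<le> (\<Sum>k\<in>sources Up W. \<Sum>z\<in>shift W S k. up_count (W - {k} - {z}))"
proof -
  define g where "g p = up_count (W - {fst p, snd p})" for p :: "'a \<times> 'a"
  have remove_two: "W - {x} - {y} = W - {x, y}" for x y by auto
  let ?P1 = "SIGMA z:S. sources Up (W - {z})" and ?P2 = "SIGMA k:sources Up W. shift W S k"
  have finS: "finite S" using fin SW by (rule finite_subset[rotated])
  have fin_sources: "finite (sources Up X)" if "X \<subseteq> W" for X
    using fin that unfolding sources_def by (auto intro: finite_subset)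
  have finite_shift: "finite (shift W S k)" for k
    using fin shift_subset[OF SW, of k] by (meson finite_Diff finite_subset)
  have "(\<Sum>z\<in>S. up_count (W - {z})) = (\<Sum>z\<in>S. \<Sum>y\<in>sources Up (W - {z}). g (z, y))"
  proof (rule sum.cong[OF refl])
    fix z assume "z \<in> S"
    then have "W - {z} \<noteq> {}" using SW nonsingle by auto
    then show "up_count (W - {z}) = (\<Sum>y\<in>sources Up (W - {z}). g (z, y))"
      using up_count_rec[of "W - {z}"] fin unfolding g_def by (simp add: remove_two)
  qed
  also have "\<dots> = sum g ?P1"
    using fin_sources by (subst sum.Sigma) (auto simp: finS)
  also have "\<dots> = sum (g \<circ> exchange (sources Up W)) ?P1"
    by (intro sum.cong refl) (simp add: g_def exchange_def insert_commute)
  also have "\<dots> = sum g (exchange (sources Up W) ` ?P1)"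
    by (rule sum.reindex[OF exchange_inj[OF WAB ind], symmetric])
  also have "\<dots> \<le> sum g ?P2"
  proof (rule sum_mono2)
    show "finite ?P2" using fin_sources finite_shift by blast
    show "exchange (sources Up W) ` ?P1 \<subseteq> ?P2" using exchange_maps[OF WAB] by blast
  qed simp
  also have "\<dots> = (\<Sum>k\<in>sources Up W. \<Sum>z\<in>shift W S k. g (k, z))"
    using sum.Sigma[of "sources Up W" "shift W S" "\<lambda>k z. g (k, z)"] fin_sources finite_shift
    by (simp add: case_prod_beta')
  also have "\<dots> = (\<Sum>k\<in>sources Up W. \<Sum>z\<in>shift W S k. up_count (W - {k} - {z}))"
    by (simp add: g_def remove_two)
  finally show ?thesis .
qed

lemma uncovered_edge_persists:
  assumes WAB: "W \<subseteq> A \<union> B" and ab: "{a, b} \<in> E" "a \<in> W" "b \<in> W" "a \<notin> S" "b \<notin> S" "a \<in> A" "b \<in> B"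
  shows "\<exists>k\<in>sources Up W. \<not> tight E (W - {k}) (shift W S k)"
proof (cases "\<exists>b'\<in>W. b' \<noteq> b \<and> {a, b'} \<in> E")
  case True
  then obtain b' where b': "b' \<in> W" "b' \<noteq> b" "{a, b'} \<in> E" by auto
  have "b' \<in> B" "a \<noteq> b'" using b'(3) ab(6) edge_cases by blast+
  then have source: "b' \<in> sources Up W" using sources_up[OF WAB] b' by auto
  have "a \<notin> leaves W b'" using ab b' unfolding leaves_def nbrs_def by auto
  moreover have "b \<notin> leaves W b'"
    using \<open>b' \<in> B\<close> ab(7) edge_cases unfolding leaves_def nbrs_def by blast
  ultimately have "a \<notin> shift W S b'" "b \<notin> shift W S b'" using ab unfolding shift_def by auto
  then have "\<not> tight E (W - {b'}) (shift W S b')"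
    using ab b' \<open>a \<noteq> b'\<close> unfolding tight_def by blast
  with source show ?thesis by blast
next
  case False
  have source: "b \<in> sources Up W" using sources_up[OF WAB] ab by auto
  have "nbrs E (W - {b}) a = {}" using False unfolding nbrs_def by auto
  moreover have "a \<notin> shift W S b" "a \<in> W - {b}"
    using ab no_loop unfolding shift_def by auto
  ultimately have "\<not> tight E (W - {b}) (shift W S b)" unfolding tight_def by blast
  with source show ?thesis by blast
qed

lemma isolated_vertex_persists:
  assumes WAB: "W \<subseteq> A \<union> B" and SW: "S \<subseteq> W" and "S \<noteq> {}"
    and v: "v \<in> W" "nbrs E W v = {}" "v \<notin> S"
  shows "\<exists>k\<in>sources Up W. \<not> tight E (W - {k}) (shift W S k)"
proof -
  obtain s where s: "s \<in> S" using assms(3) by auto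
  have "\<exists>k\<in>sources Up W. k \<noteq> v"
  proof (cases "s \<in> sources Up W")
    case False
    then obtain b where b: "b \<in> W" "{s, b} \<in> E"
      using sources_up[OF WAB] s SW unfolding nbrs_def by auto
    then have "b \<in> B" using False sources_up[OF WAB] edge_cases s SW by blast
    moreover have "b \<noteq> v" using b v s SW unfolding nbrs_def by (auto simp: insert_commute)
    ultimately show ?thesis using sources_up[OF WAB] b by auto
  qed (use s v in auto)
  then obtain k where k: "k \<in> sources Up W" "k \<noteq> v" by auto
  have "v \<notin> shift W S k" using v no_loop unfolding shift_def leaves_def by auto
  moreover have "nbrs E (W - {k}) v = {}" using v unfolding nbrs_def by auto
  ultimately show ?thesis using k v unfolding tight_def by auto
qed

lemma non_tight_shift:
  assumes WAB: "W \<subseteq> A \<union> B" and SW: "S \<subseteq> W" and "S \<noteq> {}" and "\<not> tight E W S"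
  shows "\<exists>k\<in>sources Up W. \<not> tight E (W - {k}) (shift W S k)"
proof -
  from assms(4) consider (edge) x y where "{x, y} \<in> E" "x \<in> W" "y \<in> W" "x \<notin> S" "y \<notin> S"
    | (isolated) v where "v \<in> W" "nbrs E W v = {}" "v \<notin> S"
    unfolding tight_def by blast
  then show ?thesis
  proof cases
    case (edge x y)
    from edge_cases[OF edge(1)] show ?thesis
    proof
      assume "x \<in> A \<and> y \<in> B \<and> x \<notin> B \<and> y \<notin> A"
      then show ?thesis using uncovered_edge_persists[OF WAB edge] by blast
    next
      assume "x \<in> B \<and> y \<in> A \<and> x \<notin> A \<and> y \<notin> B"
      moreover have "{y, x} \<in> E" using edge(1) by (simp add: insert_commute)
      ultimately show ?thesis using uncovered_edge_persists[OF WAB _ edge(3,2,5,4)] by blast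
    qed
  next
    case isolated
    then show ?thesis by (rule isolated_vertex_persists[OF WAB SW assms(3)])
  qed
qed

lemma source_sum_le:
  assumes "finite W" "W \<subseteq> A \<union> B" "S \<subseteq> W" "independent E S"
  shows "(\<Sum>z\<in>S. up_count (W - {z})) \<le> up_count W \<and>
    (\<not> tight E W S \<longrightarrow> (\<Sum>z\<in>S. up_count (W - {z})) < up_count W)"
  using assms
proof (induction "card W" arbitrary: W S rule: less_induct)
  case less
  note fin = less.prems(1) and WAB = less.prems(2) and SW = less.prems(3) and ind = less.prems(4)
  consider (empty) "S = {}" | (single) z where "z \<in> S" "W = {z}"
    | (general) "S \<noteq> {}" "\<forall>z\<in>S. W \<noteq> {z}" by blast
  then show ?case
  proof cases
    case empty
    then show ?thesis using up_count_pos[OF fin WAB] by simp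
  next
    case (single z)
    then have "S = {z}" using SW by auto
    moreover have "sources Up {z} = {z}" unfolding sources_def using no_loop by (auto simp: up_arc_iff)
    then have "up_count W = 1" using up_count_rec[of W] single by (simp add: up_count_empty)
    moreover have "tight E W S" using single \<open>S = {z}\<close> unfolding tight_def by auto
    ultimately show ?thesis using single by (simp add: up_count_empty)
  next
    case general
    let ?M = "sources Up W"
    let ?shifted = "\<lambda>k. \<Sum>z\<in>shift W S k. up_count (W - {k} - {z})"
    have finM: "finite ?M" using fin unfolding sources_def by auto
    have IH: "?shifted k \<le> up_count (W - {k}) \<and>
        (\<not> tight E (W - {k}) (shift W S k) \<longrightarrow> ?shifted k < up_count (W - {k}))"
      if "k \<in> ?M" for k
    proof (rule less.hyps)
      have "k \<in> W" using that unfolding sources_def by auto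
      then show "card (W - {k}) < card W" by (rule card_Diff1_less[OF fin])
    qed (use fin WAB shift_subset[OF SW] shift_independent[OF SW ind] in auto)
    have rec: "(\<Sum>k\<in>?M. up_count (W - {k})) = up_count W"
      using up_count_rec[OF fin] general(1) SW by (metis subset_empty)
    have exch: "(\<Sum>z\<in>S. up_count (W - {z})) \<le> (\<Sum>k\<in>?M. ?shifted k)"
      by (rule exchange_le[OF fin WAB SW ind general(2)])
    also have "\<dots> \<le> (\<Sum>k\<in>?M. up_count (W - {k}))"
      by (rule sum_mono) (use IH in blast)
    finally have "(\<Sum>z\<in>S. up_count (W - {z})) \<le> up_count W" using rec by simp
    moreover have "(\<Sum>z\<in>S. up_count (W - {z})) < up_count W" if nt: "\<not> tight E W S"
    proof -
      obtain k where "k \<in> ?M" "\<not> tight E (W - {k}) (shift W S k)"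
        using non_tight_shift[OF WAB SW general(1) nt] by blast
      then have "(\<Sum>k\<in>?M. ?shifted k) < (\<Sum>k\<in>?M. up_count (W - {k}))"
        by (intro sum_strict_mono_ex1[OF finM]) (use IH in blast)+
      then show ?thesis using exch rec by simp
    qed
    ultimately show ?thesis by blast
  qed
qed

lemma count_le_up_count:
  assumes "orientation E Or" "finite W" "W \<subseteq> A \<union> B"
  shows "card (respecting_seqs W Or) \<le> up_count W"
  using assms(2,3)
proof (induction "card W" arbitrary: W rule: less_induct)
  case less
  show ?case
  proof (cases "W = {}")
    case False
    have "card (respecting_seqs W Or) = (\<Sum>z\<in>sources Or W. card (respecting_seqs (W - {z}) Or))"
      by (rule card_respecting_seqs_rec[OF less.prems(1) False])
    also have "\<dots> \<le> (\<Sum>z\<in>sources Or W. up_count (W - {z}))"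
    proof (rule sum_mono)
      fix z assume "z \<in> sources Or W"
      then have "card (W - {z}) < card W"
        using card_Diff1_less[OF less.prems(1)] unfolding sources_def by auto
      then show "card (respecting_seqs (W - {z}) Or) \<le> up_count (W - {z})"
        by (rule less.hyps) (use less.prems in auto)
    qed
    also have "\<dots> \<le> up_count W"
      using source_sum_le[OF less.prems, of "sources Or W"] independent_sources[OF assms(1)]
      unfolding sources_def by auto
    finally show ?thesis .
  qed (simp add: up_count_def)
qed

lemma count_less_up_count:
  assumes Or: "orientation E Or" and fin: "finite W" and WAB: "W \<subseteq> A \<union> B"
    and nt: "\<not> tight E W (sources Or W)"
  shows "card (respecting_seqs W Or) < up_count W"
proof -
  have "W \<noteq> {}" using nt unfolding tight_def by auto
  then have "card (respecting_seqs W Or) = (\<Sum>z\<in>sources Or W. card (respecting_seqs (W - {z}) Or))"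
    by (rule card_respecting_seqs_rec[OF fin])
  also have "\<dots> \<le> (\<Sum>z\<in>sources Or W. up_count (W - {z}))"
    using count_le_up_count[OF Or] fin WAB by (intro sum_mono) auto
  also have "\<dots> < up_count W"
    using source_sum_le[OF fin WAB, of "sources Or W"] independent_sources[OF Or] nt
    unfolding sources_def by auto
  finally show ?thesis .
qed

lemma tight_independent_is_side:
  assumes EV: "\<forall>e\<in>E. e \<subseteq> V" and conn: "\<forall>u\<in>V. \<forall>v\<in>V. (u, v) \<in> (adj E)\<^sup>*"
    and ind: "independent E S" and tight: "tight E V S"
  shows "(\<forall>v\<in>V. v \<in> S \<longleftrightarrow> v \<in> B) \<or> (\<forall>v\<in>V. v \<in> S \<longleftrightarrow> v \<notin> B)"
proof (cases "V = {}")
  case False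
  then obtain x0 where x0: "x0 \<in> V" by auto
  define P where "P v \<longleftrightarrow> (v \<in> S \<longleftrightarrow> v \<in> B)" for v
  have along_edge: "P x \<longleftrightarrow> P y" if e: "(x, y) \<in> adj E" for x y
  proof -
    have e: "{x, y} \<in> E" using e unfolding adj_def by auto
    then have "x \<in> V" "y \<in> V" using EV by auto
    then have "x \<in> S \<or> y \<in> S" using tight e unfolding tight_def by blast
    moreover have "\<not> (x \<in> S \<and> y \<in> S)" using ind e unfolding independent_def by blast
    moreover have "x \<in> B \<longleftrightarrow> y \<notin> B" using edge_cases[OF e] by blast
    ultimately show ?thesis unfolding P_def by blast
  qed
  have "P x0 \<longleftrightarrow> P v" if "v \<in> V" for v
  proof -
    have "(x0, v) \<in> (adj E)\<^sup>*" using conn x0 that by blast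
    then show ?thesis by (induction rule: rtrancl_induct) (auto dest: along_edge)
  qed
  then show ?thesis unfolding P_def by blast
qed simp

lemma tight_sources_bipartite:
  assumes Or: "orientation E Or" and EV: "\<forall>e\<in>E. e \<subseteq> V"
    and conn: "\<forall>u\<in>V. \<forall>v\<in>V. (u, v) \<in> (adj E)\<^sup>*" and tight: "tight E V (sources Or V)"
  shows "Or = Up \<or> Or = O_down E A B"
proof -
  have "\<forall>x y. {x, y} \<in> E \<longrightarrow> x \<in> sources Or V \<or> y \<in> sources Or V"
    using tight EV unfolding tight_def by blast
  then have Or_eq: "Or = {(u, v). {u, v} \<in> E \<and> u \<in> sources Or V}"
    by (rule orientation_eq_from_sources[OF Or EV])
  have in_V: "{u, v} \<in> E \<Longrightarrow> u \<in> V" for u v using EV by blast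
  from tight_independent_is_side[OF EV conn independent_sources[OF Or] tight]
  show ?thesis
  proof
    assume "\<forall>v\<in>V. v \<in> sources Or V \<longleftrightarrow> v \<in> B"
    then have "Or = Up" unfolding O_up_eq by (subst Or_eq) (auto dest: in_V)
    then show ?thesis ..
  next
    assume "\<forall>v\<in>V. v \<in> sources Or V \<longleftrightarrow> v \<notin> B"
    then have "Or = O_down E A B" unfolding O_down_eq by (subst Or_eq) (auto dest: in_V)
    then show ?thesis ..
  qed
qed

theorem num_lin_ext_extremal:
  assumes fin: "finite V" and VAB: "V \<subseteq> A \<union> B" and EV: "\<forall>e\<in>E. e \<subseteq> V"
    and conn: "\<forall>u\<in>V. \<forall>v\<in>V. (u, v) \<in> (adj E)\<^sup>*" and Or: "orientation E Or"
  shows "num_lin_ext V Or \<le> num_lin_ext V Up"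
    and "num_lin_ext V Or = num_lin_ext V Up \<longleftrightarrow> Or = Up \<or> Or = O_down E A B"
proof -
  have Up_V: "Up \<subseteq> V \<times> V" using EV unfolding O_up_def by auto
  have count_Or: "num_lin_ext V Or = card (respecting_seqs V Or)"
    by (rule num_lin_ext_eq_seqs[OF fin orientation_subset[OF Or EV]])
  have count_Up: "num_lin_ext V Up = up_count V"
    unfolding up_count_def by (rule num_lin_ext_eq_seqs[OF fin Up_V])
  have "Up\<inverse> \<subseteq> V \<times> V" using Up_V by auto
  then have count_Down: "num_lin_ext V (O_down E A B) = up_count V"
    using num_lin_ext_eq_seqs[OF fin]
    unfolding O_down_converse up_count_def by (simp add: card_respecting_seqs_converse)
  show "num_lin_ext V Or \<le> num_lin_ext V Up"
    using count_le_up_count[OF Or fin VAB] count_Or count_Up by simp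
  show "num_lin_ext V Or = num_lin_ext V Up \<longleftrightarrow> Or = Up \<or> Or = O_down E A B"
  proof
    assume eq: "num_lin_ext V Or = num_lin_ext V Up"
    show "Or = Up \<or> Or = O_down E A B"
    proof (rule tight_sources_bipartite[OF Or EV conn], rule ccontr)
      assume "\<not> tight E V (sources Or V)"
      then have "card (respecting_seqs V Or) < up_count V"
        by (rule count_less_up_count[OF Or fin VAB])
      with eq count_Or count_Up show False by simp
    qed
  next
    assume "Or = Up \<or> Or = O_down E A B"
    then show "num_lin_ext V Or = num_lin_ext V Up" using count_Up count_Down by (elim disjE) simp_all
  qed
qed

end

lemma inj_image_eq_iff_card_eq:
  assumes "finite Y" "inj_on f X" "f ` X \<subseteq> Y"
  shows "f ` X = Y \<longleftrightarrow> card X = card Y"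
  using assms card_image[OF assms(2)] card_subset_eq[OF assms(1,3)] by auto

theorem theorem2p6:
  fixes V :: "'a set" and E :: "'a set set" and V1 V2 :: "'a set" and Or :: "('a \<times> 'a) set"
  assumes "simple_graph V E"
    and "connected_graph V E"
    and "bipartition V E V1 V2"
    and "orientation E Or"
    and "acyclic Or"
  shows "(\<exists>f. inj_on f (lin_ext_orient V Or) \<and>
              f ` lin_ext_orient V Or \<subseteq> lin_ext_orient V (O_up E V1 V2))
       \<and> (\<forall>f. inj_on f (lin_ext_orient V Or) \<and>
              f ` lin_ext_orient V Or \<subseteq> lin_ext_orient V (O_up E V1 V2) \<longrightarrow>
              (f ` lin_ext_orient V Or = lin_ext_orient V (O_up E V1 V2) \<longleftrightarrow>
               Or = O_up E V1 V2 \<or> Or = O_down E V1 V2))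
       \<and> num_lin_ext V Or \<le> num_lin_ext V (O_up E V1 V2)
       \<and> (num_lin_ext V Or = num_lin_ext V (O_up E V1 V2) \<longleftrightarrow>
               Or = O_up E V1 V2 \<or> Or = O_down E V1 V2)"
proof -
  have fin: "finite V" and EV: "\<forall>e\<in>E. e \<subseteq> V"
    using assms(1) unfolding simple_graph_def by auto
  have conn: "\<forall>u\<in>V. \<forall>v\<in>V. (u, v) \<in> (adj E)\<^sup>*"
    using assms(2) unfolding connected_graph_def .
  have "V1 \<inter> V2 = {}" "V \<subseteq> V1 \<union> V2" "\<forall>e\<in>E. \<exists>u\<in>V1. \<exists>v\<in>V2. e = {u, v}"
    using assms(3) unfolding bipartition_def by auto
  then interpret bipartite_edges E V1 V2 by unfold_locales
  note count = num_lin_ext_extremal[OF fin \<open>V \<subseteq> V1 \<union> V2\<close> EV conn assms(4)]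
  let ?LO = "lin_ext_orient V Or" and ?LU = "lin_ext_orient V Up"
  have fin_ext: "finite ?LO" "finite ?LU"
    unfolding lin_ext_orient_def by (simp_all add: finite_linear_extensions fin)
  have "\<exists>f. inj_on f ?LO \<and> f ` ?LO \<subseteq> ?LU"
    using card_le_inj[OF fin_ext] count(1) unfolding num_lin_ext_def by blast
  moreover have "\<forall>f. inj_on f ?LO \<and> f ` ?LO \<subseteq> ?LU \<longrightarrow>
      (f ` ?LO = ?LU \<longleftrightarrow> Or = Up \<or> Or = O_down E V1 V2)"
    using inj_image_eq_iff_card_eq[OF fin_ext(2)] count(2) unfolding num_lin_ext_def by blast
  ultimately show ?thesis using count by blast
qed

end
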